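(* Fix any strategies $g^{-i}=(g^j)_{j\ne i}$ of the players other than $i$, and any strategy $g^i$ of player $i$. Then there exists a strategy $s^i$ of player $i$ of the form $A^i_t\sim s^i_t(\cdot\mid a_{1:t-1},x^i_t)$ (depending on the private information only through the current type) such that $$P^{s^ig^{-i}}(X_t=x_t,A_t=a_t)=P^{g^ig^{-i}}(X_t=x_t,A_t=a_t)\quad\forall t\in\mathcal T,\ x_t\in\mathcal X,\ a_t\in\mathcal A,$$ and consequently $J^{i,s^ig^{-i}}=J^{i,g^ig^{-i}}$ (indeed $J^{j,s^ig^{-i}}=J^{j,g^ig^{-i}}$ for every player $j$).
   Context: Model: players $\mathcal N=\{1,\dots,N\}$, horizon $\mathcal T=\{1,\dots,T\}$. Player $i$ has a finite type set $\mathcal X^i$ and a finite action set $\mathcal A^i$; $\mathcal X=\times_i\mathcal X^i$, $\mathcal A=\times_i\mathcal A^i$. Types evolve as $P(x_1)=\prod_iQ^i_1(x^i_1)$ and $P(x_{t+1}\mid x_{1:t},a_{1:t})=\prod_iQ^i_{t+1}(x^i_{t+1}\mid x^i_t,a_t)$ for known kernels (each may depend on the full action profile $a_t$). Player $i$ privately observes its own types and all actions are public, so at time $t$ player $i$ knows $(a_{1:t-1},x^i_{1:t})$. A (general) strategy $g^i$ specifies $g^i_t(\cdot\mid a_{1:t-1},x^i_{1:t})\in\mathcal P(\mathcal A^i)$; given their information, players randomize independently. Player $i$ receives reward $R^i(x_t,a_t)$ at each time and $J^{i,g}=\mathbb E^g[\sum_{t=1}^TR^i(X_t,A_t)]$.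 $P^g$, $\mathbb E^g$ denote probability and expectation under profile $g$; $-i$ denotes all players except $i$. *)

theory Defs
  imports "HOL-Probability.Probability"
begin

text \<open>
  Players form a finite type 'p. A type profile is a function 'p => 'x, an action
  profile a function 'p => 'a. Times are 1-based: at time t (1 <= t <= T) the
  history consists of lists of length t.

  A (general) strategy of one player: g t as xs, where as = a_{1:t-1}
  (list of action profiles of length t-1) and xs = x^i_{1:t} (list of the
  player's own types, length t), is a distribution over own actions.
  Q1 i is the distribution of x^i_1; Q i (t+1) (x^i_t) (a_t) that of x^i_{t+1}.
\<close>

type_synonym ('p, 'x, 'a) strategy = "nat \<Rightarrow> ('p \<Rightarrow> 'a) list \<Rightarrow> 'x list \<Rightarrow> 'a pmf"

definition valid_strategy :: "'a set \<Rightarrow> ('p, 'x, 'a) strategy \<Rightarrow> bool" where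
  "valid_strategy Ai gi \<longleftrightarrow> (\<forall>t as xs. set_pmf (gi t as xs) \<subseteq> Ai)"

fun hist :: "('p::finite \<Rightarrow> 'x pmf) \<Rightarrow> ('p \<Rightarrow> nat \<Rightarrow> 'x \<Rightarrow> ('p \<Rightarrow> 'a) \<Rightarrow> 'x pmf)
     \<Rightarrow> ('p \<Rightarrow> ('p, 'x, 'a) strategy) \<Rightarrow> nat \<Rightarrow> (('p \<Rightarrow> 'x) list \<times> ('p \<Rightarrow> 'a) list) pmf" where
  "hist Q1 Q g 0 = return_pmf ([], [])"
| "hist Q1 Q g (Suc t) =
     bind_pmf (hist Q1 Q g t) (\<lambda>(xs, as).
       bind_pmf (if t = 0 then Pi_pmf UNIV undefined Q1
                 else Pi_pmf UNIV undefined (\<lambda>i. Q i (Suc t) (last xs i) (last as))) (\<lambda>x.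
       bind_pmf (Pi_pmf UNIV undefined (\<lambda>i. g i (Suc t) as (map (\<lambda>y. y i) (xs @ [x])))) (\<lambda>a.
       return_pmf (xs @ [x], as @ [a]))))"

definition marginal :: "('p::finite \<Rightarrow> 'x pmf) \<Rightarrow> ('p \<Rightarrow> nat \<Rightarrow> 'x \<Rightarrow> ('p \<Rightarrow> 'a) \<Rightarrow> 'x pmf)
     \<Rightarrow> ('p \<Rightarrow> ('p, 'x, 'a) strategy) \<Rightarrow> nat \<Rightarrow> (('p \<Rightarrow> 'x) \<times> ('p \<Rightarrow> 'a)) pmf" where
  "marginal Q1 Q g t = map_pmf (\<lambda>(xs, as). (last xs, last as)) (hist Q1 Q g t)"

definition J :: "('p::finite \<Rightarrow> 'x pmf) \<Rightarrow> ('p \<Rightarrow> nat \<Rightarrow> 'x \<Rightarrow> ('p \<Rightarrow> 'a) \<Rightarrow> 'x pmf)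
     \<Rightarrow> ('p \<Rightarrow> ('p, 'x, 'a) strategy) \<Rightarrow> nat \<Rightarrow> (('p \<Rightarrow> 'x) \<Rightarrow> ('p \<Rightarrow> 'a) \<Rightarrow> real) \<Rightarrow> real" where
  "J Q1 Q g T Rj = measure_pmf.expectation (hist Q1 Q g T)
      (\<lambda>(xs, as). \<Sum>t<T. Rj (xs ! t) (as ! t))"

end

theory Submission
  imports Defs
begin

text \<open>
  The probability of a history \<open>(x_(1:t), a_(1:t))\<close> factorizes into one factor per player, player j's
  factor involving only j's own types and the public actions. Summing out the type histories, the
  law of \<open>(X_t, a_(1:t))\<close> becomes a product over the players of sums over their own type histories.
  Player i's conditional law of \<open>A^i_t\<close> given \<open>(a_(1:t-1), X^i_t)\<close> is a strategy of the required
  form, and by induction on t it leaves player i's factor, summed over i's earlier types, unchanged.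
  Hence the laws of \<open>(X_t, A_t)\<close> agree, and so do the expected total rewards, which depend only on
  these laws.
\<close>

lemma pmf_bind_map_inj:
  assumes inj: "\<And>h z h' z'. \<phi> h z = \<phi> h' z' \<Longrightarrow> h = h' \<and> z = z'"
  shows "pmf (bind_pmf M (\<lambda>h. map_pmf (\<phi> h) (N h))) (\<phi> h0 z0) = pmf M h0 * pmf (N h0) z0"
proof -
  have "pmf (map_pmf (\<phi> h) (N h)) (\<phi> h0 z0) = (if h = h0 then pmf (N h0) z0 else 0)" for h
  proof (cases "h = h0")
    case True
    have "inj (\<phi> h0)" using inj by (auto simp: inj_def)
    then show ?thesis using True by (simp add: pmf_map_inj')
  next
    case False
    then have "\<phi> h0 z0 \<notin> \<phi> h ` set_pmf (N h)" using inj by blast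
    then show ?thesis using False by (simp add: pmf_map_outside)
  qed
  then have "pmf (bind_pmf M (\<lambda>h. map_pmf (\<phi> h) (N h))) (\<phi> h0 z0)
      = (\<integral>h. (if h = h0 then pmf (N h0) z0 else 0) \<partial>measure_pmf M)"
    by (simp add: pmf_bind)
  also have "\<dots> = (\<Sum>h\<in>{h0}. (if h = h0 then pmf (N h0) z0 else 0) * pmf M h)"
    by (rule integral_measure_pmf_real) (auto split: if_splits)
  finally show ?thesis by simp
qed

definition weighted_pmf :: "'a set \<Rightarrow> ('a \<Rightarrow> real) \<Rightarrow> 'a pmf" where
  "weighted_pmf S w = embed_pmf (\<lambda>x. if x \<in> S then w x / (\<Sum>y\<in>S. w y) else 0)"

lemma pmf_weighted_pmf:
  assumes "finite S" and nonneg: "\<And>x. x \<in> S \<Longrightarrow> 0 \<le> w x" and "(\<Sum>y\<in>S. w y) \<noteq> 0"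
  shows "pmf (weighted_pmf S w) x = (if x \<in> S then w x / (\<Sum>y\<in>S. w y) else 0)"
  unfolding weighted_pmf_def
proof (rule pmf_embed_pmf)
  show "0 \<le> (if x \<in> S then w x / (\<Sum>y\<in>S. w y) else 0)" for x
    using nonneg by (simp add: sum_nonneg)
  have "(\<integral>\<^sup>+x. ennreal (if x \<in> S then w x / (\<Sum>y\<in>S. w y) else 0) \<partial>count_space UNIV)
      = (\<Sum>x\<in>S. ennreal (w x / (\<Sum>y\<in>S. w y)))"
    using assms(1) by (subst nn_integral_count_space') (auto intro: sum.cong)
  also have "\<dots> = ennreal (\<Sum>x\<in>S. w x / (\<Sum>y\<in>S. w y))"
    using nonneg by (intro sum_ennreal) (simp add: sum_nonneg)
  also have "\<dots> = 1"
    using assms(3) by (simp add: sum_divide_distrib[symmetric])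
  finally show "(\<integral>\<^sup>+x. ennreal (if x \<in> S then w x / (\<Sum>y\<in>S. w y) else 0) \<partial>count_space UNIV) = 1" .
qed

lemma set_pmf_weighted_pmf_subset:
  assumes "finite S" "\<And>x. x \<in> S \<Longrightarrow> 0 \<le> w x" "(\<Sum>y\<in>S. w y) \<noteq> 0"
  shows "set_pmf (weighted_pmf S w) \<subseteq> S"
  using pmf_weighted_pmf[OF assms] by (auto simp: set_pmf_eq)

lemma sum_lists_length_Suc:
  assumes "finite S"
  shows "(\<Sum>ys\<in>{ys. set ys \<subseteq> S \<and> length ys = Suc n}. F ys)
       = (\<Sum>ys\<in>{ys. set ys \<subseteq> S \<and> length ys = n}. \<Sum>y\<in>S. F (ys @ [y]))"
proof -
  let ?L = "{ys. set ys \<subseteq> S \<and> length ys = n}"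
  have "{ys. set ys \<subseteq> S \<and> length ys = Suc n} = (\<lambda>(ys, y). ys @ [y]) ` (?L \<times> S)"
    by (auto simp: length_Suc_conv_rev image_iff)
  moreover have "inj_on (\<lambda>(ys, y). ys @ [y]) (?L \<times> S)"
    by (auto simp: inj_on_def)
  ultimately show ?thesis
    by (simp add: sum.reindex sum.cartesian_product case_prod_unfold)
qed

lemma sum_lists_length_prod:
  fixes X :: "'p::finite \<Rightarrow> 'x set" and G :: "'p \<Rightarrow> 'x list \<Rightarrow> 'b::comm_semiring_1"
  assumes finX: "\<And>j. finite (X j)"
  shows "(\<Sum>xs\<in>{xs. set xs \<subseteq> Pi UNIV X \<and> length xs = n}. \<Prod>j\<in>UNIV. G j (map (\<lambda>x. x j) xs))
       = (\<Prod>j\<in>UNIV. \<Sum>ys\<in>{ys. set ys \<subseteq> X j \<and> length ys = n}. G j ys)"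
proof (induction n arbitrary: G)
  case 0
  have no_lists: "{xs. set xs \<subseteq> S \<and> length xs = 0} = {[]}" for S :: "'c set" by auto
  show ?case unfolding no_lists by simp
next
  case (Suc n)
  have finPi: "finite (Pi UNIV X)"
    using finite_PiE[of UNIV X] finX by (simp add: PiE_UNIV_domain)
  have "(\<Sum>xs\<in>{xs. set xs \<subseteq> Pi UNIV X \<and> length xs = Suc n}. \<Prod>j\<in>UNIV. G j (map (\<lambda>x. x j) xs))
      = (\<Sum>x\<in>Pi UNIV X. \<Sum>xs\<in>{xs. set xs \<subseteq> Pi UNIV X \<and> length xs = n}.
           \<Prod>j\<in>UNIV. G j (map (\<lambda>x. x j) xs @ [x j]))"
    by (simp add: sum_lists_length_Suc[OF finPi] sum.swap[of _ _ "Pi UNIV X"])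
  also have "\<dots> = (\<Sum>x\<in>Pi UNIV X. \<Prod>j\<in>UNIV. \<Sum>ys\<in>{ys. set ys \<subseteq> X j \<and> length ys = n}. G j (ys @ [x j]))"
  proof (rule sum.cong[OF refl])
    fix x show "(\<Sum>xs\<in>{xs. set xs \<subseteq> Pi UNIV X \<and> length xs = n}. \<Prod>j\<in>UNIV. G j (map (\<lambda>x. x j) xs @ [x j]))
      = (\<Prod>j\<in>UNIV. \<Sum>ys\<in>{ys. set ys \<subseteq> X j \<and> length ys = n}. G j (ys @ [x j]))"
      using Suc.IH[of "\<lambda>j ys. G j (ys @ [x j])"] by simp
  qed
  also have "\<dots> = (\<Prod>j\<in>UNIV. \<Sum>y\<in>X j. \<Sum>ys\<in>{ys. set ys \<subseteq> X j \<and> length ys = n}. G j (ys @ [y]))"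
    using prod_sum_PiE[of UNIV X "\<lambda>j y. \<Sum>ys\<in>{ys. set ys \<subseteq> X j \<and> length ys = n}. G j (ys @ [y])"] finX
    by (simp add: PiE_UNIV_domain)
  also have "\<dots> = (\<Prod>j\<in>UNIV. \<Sum>ys\<in>{ys. set ys \<subseteq> X j \<and> length ys = Suc n}. G j ys)"
    using finX by (simp add: sum_lists_length_Suc sum.swap[of _ "X _"])
  finally show ?case .
qed

lemma indicator_singleton_prod:
  fixes x v :: "'p::finite \<Rightarrow> 'x"
  shows "(indicator {x} v :: real) = (\<Prod>j\<in>UNIV. indicator {x j} (v j))"
proof (cases "v = x")
  case False
  then obtain j where "v j \<noteq> x j" by auto
  then have "(\<Prod>j\<in>UNIV. indicator {x j} (v j) :: real) = 0"
    by (intro prod_zero bexI[of _ j]) auto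
  then show ?thesis using False by simp
qed simp

lemma hist_Suc_map:
  "hist Q1 Q g (Suc t) = bind_pmf (hist Q1 Q g t) (\<lambda>h.
     map_pmf (\<lambda>(x, a). (fst h @ [x], snd h @ [a]))
       (bind_pmf (if t = 0 then Pi_pmf UNIV undefined Q1
                  else Pi_pmf UNIV undefined (\<lambda>j. Q j (Suc t) (last (fst h) j) (last (snd h))))
         (\<lambda>x. map_pmf (Pair x)
           (Pi_pmf UNIV undefined (\<lambda>j. g j (Suc t) (snd h) (map (\<lambda>y. y j) (fst h @ [x])))))))"
  by (auto simp: map_pmf_def bind_assoc_pmf bind_return_pmf split_beta intro!: bind_pmf_cong)

lemma length_hist:
  "(xs, as) \<in> set_pmf (hist Q1 Q g t) \<Longrightarrow> length xs = t \<and> length as = t"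
  by (induction t arbitrary: xs as) (auto split: if_splits)

definition type_law :: "('p \<Rightarrow> 'x pmf) \<Rightarrow> ('p \<Rightarrow> nat \<Rightarrow> 'x \<Rightarrow> ('p \<Rightarrow> 'a) \<Rightarrow> 'x pmf)
     \<Rightarrow> 'p \<Rightarrow> nat \<Rightarrow> 'x \<Rightarrow> ('p \<Rightarrow> 'a) \<Rightarrow> 'x pmf" where
  "type_law Q1 Q j t x a = (if t = 1 then Q1 j else Q j t x a)"

lemma pmf_hist_snoc:
  fixes Q1 :: "'p::finite \<Rightarrow> 'x pmf"
  shows "pmf (hist Q1 Q g (Suc t)) (xs @ [x], as @ [a]) = pmf (hist Q1 Q g t) (xs, as)
     * (\<Prod>j\<in>UNIV. pmf (type_law Q1 Q j (Suc t) (last xs j) (last as)) (x j))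
     * (\<Prod>j\<in>UNIV. pmf (g j (Suc t) as (map (\<lambda>y. y j) (xs @ [x]))) (a j))"
proof -
  have pair: "pmf (bind_pmf P (\<lambda>x. map_pmf (Pair x) (K x))) (x, a) = pmf P x * pmf (K x) a"
    for P :: "'c pmf" and K :: "'c \<Rightarrow> 'd pmf" and x a
    using pmf_bind_map_inj[of Pair P K x a] by simp
  have snoc: "(xs @ [x], as @ [a]) = (\<lambda>h (x, a). (fst h @ [x], snd h @ [a])) (xs, as) (x, a)"
    by simp
  show ?thesis
    unfolding hist_Suc_map snoc
    by (subst pmf_bind_map_inj) (auto simp: pair pmf_Pi type_law_def)
qed

text \<open>For \<open>k = 0\<close> the
  entries at index \<open>k - 1\<close> are junk; \<open>type_law\<close> ignores them at time 1.\<close>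
definition own_weight :: "('p \<Rightarrow> 'x pmf) \<Rightarrow> ('p \<Rightarrow> nat \<Rightarrow> 'x \<Rightarrow> ('p \<Rightarrow> 'a) \<Rightarrow> 'x pmf) \<Rightarrow> 'p
     \<Rightarrow> ('p, 'x, 'a) strategy \<Rightarrow> 'x list \<Rightarrow> ('p \<Rightarrow> 'a) list \<Rightarrow> real" where
  "own_weight Q1 Q j h ys as = (\<Prod>k<length ys.
     pmf (type_law Q1 Q j (Suc k) (ys ! (k - 1)) (as ! (k - 1))) (ys ! k)
     * pmf (h (Suc k) (take k as) (take (Suc k) ys)) ((as ! k) j))"

lemma own_weight_Nil [simp]: "own_weight Q1 Q j h [] as = 1"
  by (simp add: own_weight_def)

lemma own_weight_nonneg: "0 \<le> own_weight Q1 Q j h ys as"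
  unfolding own_weight_def by (intro prod_nonneg) auto

lemma own_weight_snoc:
  assumes "length ys = length as"
  shows "own_weight Q1 Q j h (ys @ [y]) (as @ [a]) = own_weight Q1 Q j h ys as
     * pmf (type_law Q1 Q j (Suc (length ys)) (last ys) (last as)) y
     * pmf (h (Suc (length ys)) as (ys @ [y])) (a j)"
proof -
  have "type_law Q1 Q j (Suc (length ys)) ((ys @ [y]) ! (length ys - 1)) ((as @ [a]) ! (length ys - 1))
      = type_law Q1 Q j (Suc (length ys)) (last ys) (last as)"
    using assms by (cases "ys = []") (auto simp: type_law_def nth_append last_conv_nth)
  moreover have "own_weight Q1 Q j h ys as = (\<Prod>k<length ys.
     pmf (type_law Q1 Q j (Suc k) ((ys @ [y]) ! (k - 1)) ((as @ [a]) ! (k - 1))) ((ys @ [y]) ! k)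
     * pmf (h (Suc k) (take k (as @ [a])) (take (Suc k) (ys @ [y]))) (((as @ [a]) ! k) j))"
    unfolding own_weight_def using assms by (intro prod.cong) (auto simp: nth_append)
  ultimately show ?thesis
    using assms by (simp add: own_weight_def nth_append mult.assoc)
qed

lemma pmf_hist:
  fixes Q1 :: "'p::finite \<Rightarrow> 'x pmf"
  shows "pmf (hist Q1 Q g t) (xs, as) = (if length xs = t \<and> length as = t
     then \<Prod>j\<in>UNIV. own_weight Q1 Q j (g j) (map (\<lambda>x. x j) xs) as else 0)"
proof (induction t arbitrary: xs as)
  case 0
  then show ?case by (auto simp: indicator_def)
next
  case (Suc t)
  show ?case
  proof (cases "length xs = Suc t \<and> length as = Suc t")
    case True
    then obtain xs' x as' a where "xs = xs' @ [x]" "as = as' @ [a]" "length xs' = t" "length as' = t"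
      by (metis length_Suc_conv_rev)
    moreover have "type_law Q1 Q j (Suc t) (last (map (\<lambda>x. x j) xs')) (last as')
        = type_law Q1 Q j (Suc t) (last xs' j) (last as')" for j
      using \<open>length xs' = t\<close> by (cases "xs' = []") (auto simp: type_law_def last_map)
    ultimately show ?thesis
      by (simp add: pmf_hist_snoc Suc.IH own_weight_snoc prod.distrib mult_ac del: hist.simps)
  next
    case False
    then show ?thesis
      using length_hist by (metis set_pmf_iff)
  qed
qed

lemma hist_take:
  "map_pmf (\<lambda>(xs, as). (take n xs, take n as)) (hist Q1 Q h (n + d)) = hist Q1 Q h n"
proof (induction d)
  case 0
  have "map_pmf (\<lambda>(xs, as). (take n xs, take n as)) (hist Q1 Q h n) = map_pmf id (hist Q1 Q h n)"
    by (intro map_pmf_cong refl) (auto dest: length_hist)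
  then show ?case by simp
next
  case (Suc d)
  have "map_pmf (\<lambda>(xs, as). (take n xs, take n as)) (hist Q1 Q h (Suc (n + d)))
      = bind_pmf (hist Q1 Q h (n + d)) (\<lambda>p. return_pmf ((\<lambda>(xs, as). (take n xs, take n as)) p))"
    unfolding hist.simps map_bind_pmf
    by (intro bind_pmf_cong refl) (auto simp: map_bind_pmf dest: length_hist split: prod.splits)
  then show ?case using Suc.IH by (simp add: map_pmf_def)
qed

lemma map_nth_hist:
  assumes "t < T"
  shows "map_pmf (\<lambda>(xs, as). (xs ! t, as ! t)) (hist Q1 Q h T) = marginal Q1 Q h (Suc t)"
proof -
  have "map_pmf (\<lambda>(xs, as). (xs ! t, as ! t)) (hist Q1 Q h T)
      = map_pmf (\<lambda>(xs, as). (last xs, last as))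
          (map_pmf (\<lambda>(xs, as). (take (Suc t) xs, take (Suc t) as)) (hist Q1 Q h (Suc t + (T - Suc t))))"
    unfolding map_pmf_comp using assms
    by (intro map_pmf_cong) (auto dest!: length_hist simp: take_Suc_conv_app_nth)
  then show ?thesis
    by (simp only: hist_take) (simp add: marginal_def)
qed

locale finite_game =
  fixes X :: "'p::finite \<Rightarrow> 'x set" and A :: "'p \<Rightarrow> 'a set"
    and Q1 :: "'p \<Rightarrow> 'x pmf" and Q :: "'p \<Rightarrow> nat \<Rightarrow> 'x \<Rightarrow> ('p \<Rightarrow> 'a) \<Rightarrow> 'x pmf"
  assumes finite_types: "\<And>j. finite (X j)" and finite_actions: "\<And>j. finite (A j)"
    and set_pmf_Q1: "\<And>j. set_pmf (Q1 j) \<subseteq> X j"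
    and set_pmf_Q: "\<And>j t x a. x \<in> X j \<Longrightarrow> a \<in> Pi UNIV A \<Longrightarrow> set_pmf (Q j t x a) \<subseteq> X j"
begin

definition own_histories :: "'p \<Rightarrow> nat \<Rightarrow> 'x list set" where
  "own_histories j n = {ys. set ys \<subseteq> X j \<and> length ys = n}"

lemma sum_own_histories_Suc:
  "(\<Sum>ys\<in>own_histories j (Suc n). F ys) = (\<Sum>ys\<in>own_histories j n. \<Sum>y\<in>X j. F (ys @ [y]))"
  unfolding own_histories_def using finite_types by (rule sum_lists_length_Suc)

lemma set_pmf_hist:
  assumes valid: "\<And>j. valid_strategy (A j) (h j)"
  shows "(xs, as) \<in> set_pmf (hist Q1 Q h t) \<Longrightarrow> set xs \<subseteq> Pi UNIV X \<and> set as \<subseteq> Pi UNIV A"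
proof (induction t arbitrary: xs as)
  case (Suc t)
  from Suc.prems obtain xs' as' x a where hist: "(xs', as') \<in> set_pmf (hist Q1 Q h t)"
    and xs: "xs = xs' @ [x]" and as: "as = as' @ [a]"
    and x: "x \<in> set_pmf (if t = 0 then Pi_pmf UNIV undefined Q1
                else Pi_pmf UNIV undefined (\<lambda>j. Q j (Suc t) (last xs' j) (last as')))"
    and a: "a \<in> set_pmf (Pi_pmf UNIV undefined (\<lambda>j. h j (Suc t) as' (map (\<lambda>y. y j) (xs' @ [x]))))"
    by (auto split: prod.splits)
  have IH: "set xs' \<subseteq> Pi UNIV X" "set as' \<subseteq> Pi UNIV A"
    using Suc.IH[OF hist] by auto
  have "a \<in> Pi UNIV A"
    using a valid by (auto simp: set_Pi_pmf PiE_dflt_def valid_strategy_def) blast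
  moreover have "x \<in> Pi UNIV X"
  proof (cases "t = 0")
    case True
    then show ?thesis using x set_pmf_Q1 by (auto simp: set_Pi_pmf PiE_dflt_def)
  next
    case False
    then have "xs' \<noteq> []" "as' \<noteq> []"
      using length_hist[OF hist] by auto
    then have "last xs' \<in> Pi UNIV X" "last as' \<in> Pi UNIV A"
      using IH last_in_set by blast+
    then show ?thesis using x False set_pmf_Q by (fastforce simp: set_Pi_pmf PiE_dflt_def)
  qed
  ultimately show ?case using IH xs as by auto
qed simp

lemma finite_set_pmf_hist:
  assumes "\<And>j. valid_strategy (A j) (h j)"
  shows "finite (set_pmf (hist Q1 Q h t))"
proof (rule finite_subset)
  show "set_pmf (hist Q1 Q h t)
      \<subseteq> {xs. set xs \<subseteq> Pi UNIV X \<and> length xs = t} \<times> {as. set as \<subseteq> Pi UNIV A \<and> length as = t}"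
    using set_pmf_hist[OF assms] length_hist by fast
  have "finite (Pi UNIV X)" "finite (Pi UNIV A)"
    using finite_PiE[of UNIV X] finite_PiE[of UNIV A] finite_types finite_actions
    by (simp_all add: PiE_UNIV_domain)
  then show "finite ({xs. set xs \<subseteq> Pi UNIV X \<and> length xs = t} \<times> {as. set as \<subseteq> Pi UNIV A \<and> length as = t})"
    by (simp add: finite_lists_length_eq)
qed

lemma pmf_last_types_actions:
  assumes valid: "\<And>j. valid_strategy (A j) (h j)" and "t \<noteq> 0"
  shows "pmf (map_pmf (\<lambda>(xs, as). (last xs, as)) (hist Q1 Q h t)) (x, as)
    = (if length as = t then \<Prod>j\<in>UNIV. \<Sum>ys\<in>own_histories j t.
         own_weight Q1 Q j (h j) ys as * indicator {x j} (last ys) else 0)"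
proof -
  let ?H = "{xs. set xs \<subseteq> Pi UNIV X \<and> length xs = t}"
  have finite_H: "finite ?H"
    using finite_PiE[of UNIV X] finite_types by (simp add: PiE_UNIV_domain finite_lists_length_eq)
  have last_col: "xs \<in> ?H \<Longrightarrow> last (map (\<lambda>x. x j) xs) = last xs j" for xs j
    using \<open>t \<noteq> 0\<close> by (cases xs rule: rev_cases) auto
  have "pmf (map_pmf (\<lambda>(xs, as). (last xs, as)) (hist Q1 Q h t)) (x, as)
      = (\<integral>p. indicator {(x, as)} (last (fst p), snd p) \<partial>measure_pmf (hist Q1 Q h t))"
    by (simp add: map_pmf_def pmf_bind split_beta)
  also have "\<dots> = (\<Sum>p\<in>(\<lambda>xs. (xs, as)) ` ?H. indicator {(x, as)} (last (fst p), snd p) * pmf (hist Q1 Q h t) p)"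
    using finite_H set_pmf_hist[OF valid]
    by (intro integral_measure_pmf_real) (auto split: split_indicator_asm simp: image_iff dest: length_hist)
  also have "\<dots> = (\<Sum>xs\<in>?H. pmf (hist Q1 Q h t) (xs, as) * indicator {x} (last xs))"
    by (subst sum.reindex) (auto simp: inj_on_def indicator_def intro!: sum.cong)
  also have "\<dots> = (if length as = t then \<Sum>xs\<in>?H. \<Prod>j\<in>UNIV.
      own_weight Q1 Q j (h j) (map (\<lambda>x. x j) xs) as * indicator {x j} (last (map (\<lambda>x. x j) xs)) else 0)"
    using \<open>t \<noteq> 0\<close>
    by (auto simp: pmf_hist indicator_singleton_prod[of x] last_col prod.distrib intro!: sum.cong)
  also have "\<dots> = (if length as = t then \<Prod>j\<in>UNIV. \<Sum>ys\<in>own_histories j t.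
         own_weight Q1 Q j (h j) ys as * indicator {x j} (last ys) else 0)"
    using sum_lists_length_prod[OF finite_types, where n = t
        and G = "\<lambda>j ys. own_weight Q1 Q j (h j) ys as * indicator {x j} (last ys)"]
    by (simp add: own_histories_def)
  finally show ?thesis .
qed

definition joint_weight ::
    "'p \<Rightarrow> ('p, 'x, 'a) strategy \<Rightarrow> nat \<Rightarrow> ('p \<Rightarrow> 'a) list \<Rightarrow> 'x \<Rightarrow> 'a \<Rightarrow> real" where
  "joint_weight i gi t as y b = (\<Sum>ys\<in>own_histories i t. own_weight Q1 Q i gi ys as
     * pmf (type_law Q1 Q i (Suc t) (last ys) (last as)) y * pmf (gi (Suc t) as (ys @ [y])) b)"

definition type_weight ::
    "'p \<Rightarrow> ('p, 'x, 'a) strategy \<Rightarrow> nat \<Rightarrow> ('p \<Rightarrow> 'a) list \<Rightarrow> 'x \<Rightarrow> real" where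
  "type_weight i gi t as y = (\<Sum>ys\<in>own_histories i t. own_weight Q1 Q i gi ys as
     * pmf (type_law Q1 Q i (Suc t) (last ys) (last as)) y)"

text \<open>The conditional law of \<open>A^i_t\<close> given \<open>a_(1:t-1)\<close> and \<open>X^i_t = y\<close>: the other players'
  factors do not involve player i's types, so they cancel in the conditioning. Where the
  conditioning event has weight zero any admissible law will do.\<close>
definition cond_strategy ::
    "'p \<Rightarrow> ('p, 'x, 'a) strategy \<Rightarrow> nat \<Rightarrow> ('p \<Rightarrow> 'a) list \<Rightarrow> 'x \<Rightarrow> 'a pmf" where
  "cond_strategy i gi t as y = (if type_weight i gi (t - 1) as y = 0 then gi t as [y]
     else weighted_pmf (A i) (joint_weight i gi (t - 1) as y))"

lemma joint_weight_nonneg: "0 \<le> joint_weight i gi t as y b"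
  unfolding joint_weight_def by (intro sum_nonneg mult_nonneg_nonneg own_weight_nonneg) auto

lemma joint_weight_outside:
  assumes "valid_strategy (A i) gi" "b \<notin> A i"
  shows "joint_weight i gi t as y b = 0"
proof -
  have "b \<notin> set_pmf (gi t' as' xs')" for t' as' xs'
    using assms by (auto simp: valid_strategy_def)
  then show ?thesis by (simp add: joint_weight_def set_pmf_iff)
qed

lemma sum_joint_weight:
  assumes "valid_strategy (A i) gi"
  shows "(\<Sum>b\<in>A i. joint_weight i gi t as y b) = type_weight i gi t as y"
proof -
  have "(\<Sum>b\<in>A i. joint_weight i gi t as y b) = (\<Sum>ys\<in>own_histories i t. own_weight Q1 Q i gi ys as
     * pmf (type_law Q1 Q i (Suc t) (last ys) (last as)) y * (\<Sum>b\<in>A i. pmf (gi (Suc t) as (ys @ [y])) b))"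
    unfolding joint_weight_def by (subst sum.swap) (simp add: sum_distrib_left)
  also have "\<dots> = type_weight i gi t as y"
    using assms finite_actions[of i]
    by (simp add: type_weight_def sum_pmf_eq_1 valid_strategy_def)
  finally show ?thesis .
qed

lemma set_pmf_cond_strategy:
  assumes "valid_strategy (A i) gi"
  shows "set_pmf (cond_strategy i gi t as y) \<subseteq> A i"
proof (cases "type_weight i gi (t - 1) as y = 0")
  case False
  then show ?thesis
    unfolding cond_strategy_def
    using set_pmf_weighted_pmf_subset[OF finite_actions joint_weight_nonneg] sum_joint_weight[OF assms]
    by simp
qed (use assms in \<open>simp add: cond_strategy_def valid_strategy_def\<close>)

lemma type_weight_mult_cond_strategy:
  assumes valid: "valid_strategy (A i) gi"
  shows "type_weight i gi t as y * pmf (cond_strategy i gi (Suc t) as y) b = joint_weight i gi t as y b"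
proof (cases "type_weight i gi t as y = 0")
  case True
  then have "b \<in> A i \<Longrightarrow> joint_weight i gi t as y b = 0"
    using sum_joint_weight[OF valid] finite_actions joint_weight_nonneg
    by (metis sum_nonneg_eq_0_iff)
  then show ?thesis using True joint_weight_outside[OF valid] by auto
next
  case False
  then show ?thesis
    using finite_actions joint_weight_nonneg joint_weight_outside[OF valid]
    by (auto simp: cond_strategy_def pmf_weighted_pmf sum_joint_weight[OF valid])
qed

lemma sum_own_weight_cond_strategy:
  assumes valid: "valid_strategy (A i) gi"
  shows "length as = t \<Longrightarrow>
    (\<Sum>ys\<in>own_histories i t. own_weight Q1 Q i (\<lambda>t as xs. cond_strategy i gi t as (last xs)) ys as * f (last ys))
    = (\<Sum>ys\<in>own_histories i t. own_weight Q1 Q i gi ys as * f (last ys))"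
proof (induction t arbitrary: as f)
  case 0
  have "own_histories i 0 = {[]}" by (auto simp: own_histories_def)
  then show ?case by simp
next
  case (Suc t)
  let ?m = "\<lambda>t as xs. cond_strategy i gi t as (last xs)"
  obtain as' a where as: "as = as' @ [a]" and len_as': "length as' = t"
    by (metis Suc.prems length_Suc_conv_rev)
  have len: "ys \<in> own_histories i t \<Longrightarrow> length ys = length as'" for ys
    using len_as' by (simp add: own_histories_def)
  have type_weight_cond: "(\<Sum>ys\<in>own_histories i t. own_weight Q1 Q i ?m ys as'
      * pmf (type_law Q1 Q i (Suc t) (last ys) (last as')) y) = type_weight i gi t as' y" for y
    using Suc.IH[OF len_as', of "\<lambda>z. pmf (type_law Q1 Q i (Suc t) z (last as')) y"]
    by (simp add: type_weight_def)
  have "(\<Sum>ys\<in>own_histories i (Suc t). own_weight Q1 Q i ?m ys as * f (last ys))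
      = (\<Sum>y\<in>X i. (\<Sum>ys\<in>own_histories i t. own_weight Q1 Q i ?m ys as'
          * pmf (type_law Q1 Q i (Suc t) (last ys) (last as')) y) * pmf (cond_strategy i gi (Suc t) as' y) (a i) * f y)"
    unfolding sum_own_histories_Suc as
    by (subst sum.swap) (simp add: own_weight_snoc len len_as' sum_distrib_right cong: sum.cong)
  also have "\<dots> = (\<Sum>y\<in>X i. joint_weight i gi t as' y (a i) * f y)"
    by (simp add: type_weight_cond type_weight_mult_cond_strategy[OF valid])
  also have "\<dots> = (\<Sum>ys\<in>own_histories i (Suc t). own_weight Q1 Q i gi ys as * f (last ys))"
    unfolding sum_own_histories_Suc as joint_weight_def
    by (subst sum.swap) (simp add: own_weight_snoc len len_as' sum_distrib_right cong: sum.cong)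
  finally show ?case .
qed

lemma valid_strategy_cond_strategy_update:
  assumes "\<And>j. valid_strategy (A j) (g j)"
  shows "valid_strategy (A j) ((g(i := \<lambda>t as xs. cond_strategy i (g i) t as (last xs))) j)"
  using assms set_pmf_cond_strategy by (auto simp: valid_strategy_def)

lemma marginal_cond_strategy_update:
  assumes valid: "\<And>j. valid_strategy (A j) (g j)" and "t \<noteq> 0"
  shows "marginal Q1 Q (g(i := \<lambda>t as xs. cond_strategy i (g i) t as (last xs))) t = marginal Q1 Q g t"
proof -
  let ?g' = "g(i := \<lambda>t as xs. cond_strategy i (g i) t as (last xs))"
  have "map_pmf (\<lambda>(xs, as). (last xs, as)) (hist Q1 Q ?g' t) = map_pmf (\<lambda>(xs, as). (last xs, as)) (hist Q1 Q g t)"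
  proof (rule pmf_eqI)
    fix z :: "('p \<Rightarrow> 'x) \<times> ('p \<Rightarrow> 'a) list"
    obtain x as where z: "z = (x, as)" by fastforce
    have "(\<Sum>ys\<in>own_histories j t. own_weight Q1 Q j (?g' j) ys as * indicator {x j} (last ys))
        = (\<Sum>ys\<in>own_histories j t. own_weight Q1 Q j (g j) ys as * indicator {x j} (last ys))"
      if "length as = t" for j
      using sum_own_weight_cond_strategy[OF valid that] by (cases "j = i") simp_all
    then show "pmf (map_pmf (\<lambda>(xs, as). (last xs, as)) (hist Q1 Q ?g' t)) z
        = pmf (map_pmf (\<lambda>(xs, as). (last xs, as)) (hist Q1 Q g t)) z"
      unfolding z pmf_last_types_actions[OF valid_strategy_cond_strategy_update[OF valid] \<open>t \<noteq> 0\<close>]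
        pmf_last_types_actions[OF valid \<open>t \<noteq> 0\<close>]
      by simp
  qed
  then have "map_pmf (\<lambda>(x, as). (x, last as)) (map_pmf (\<lambda>(xs, as). (last xs, as)) (hist Q1 Q ?g' t))
      = map_pmf (\<lambda>(x, as). (x, last as)) (map_pmf (\<lambda>(xs, as). (last xs, as)) (hist Q1 Q g t))"
    by simp
  then show ?thesis
    by (simp add: marginal_def map_pmf_comp case_prod_unfold)
qed

lemma J_eq_sum_marginal:
  assumes "\<And>j. valid_strategy (A j) (h j)"
  shows "J Q1 Q h T R = (\<Sum>t<T. measure_pmf.expectation (marginal Q1 Q h (Suc t)) (\<lambda>(x, a). R x a))"
proof -
  have "J Q1 Q h T R = (\<Sum>t<T. measure_pmf.expectation (hist Q1 Q h T) (\<lambda>(xs, as). R (xs ! t) (as ! t)))"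
    unfolding J_def split_beta
    using finite_set_pmf_hist[OF assms] by (simp add: integrable_measure_pmf_finite)
  also have "\<dots> = (\<Sum>t<T. measure_pmf.expectation (marginal Q1 Q h (Suc t)) (\<lambda>(x, a). R x a))"
    by (intro sum.cong refl) (simp add: map_nth_hist[symmetric] case_prod_unfold)
  finally show ?thesis .
qed

end

theorem fact1:
  fixes X :: "'p::finite \<Rightarrow> 'x set" and A :: "'p \<Rightarrow> 'a set"
    and Q1 :: "'p \<Rightarrow> 'x pmf" and Q :: "'p \<Rightarrow> nat \<Rightarrow> 'x \<Rightarrow> ('p \<Rightarrow> 'a) \<Rightarrow> 'x pmf"
    and R :: "'p \<Rightarrow> ('p \<Rightarrow> 'x) \<Rightarrow> ('p \<Rightarrow> 'a) \<Rightarrow> real"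
    and g :: "'p \<Rightarrow> ('p, 'x, 'a) strategy"
    and i :: 'p and T :: nat
  assumes finX: "\<And>j. finite (X j)" and neX: "\<And>j. X j \<noteq> {}"
    and finA: "\<And>j. finite (A j)" and neA: "\<And>j. A j \<noteq> {}"
    and Q1X: "\<And>j. set_pmf (Q1 j) \<subseteq> X j"
    and QX: "\<And>j t x a. x \<in> X j \<Longrightarrow> a \<in> Pi UNIV A \<Longrightarrow> set_pmf (Q j t x a) \<subseteq> X j"
    and g_valid: "\<And>j. valid_strategy (A j) (g j)"
  shows "\<exists>m :: nat \<Rightarrow> ('p \<Rightarrow> 'a) list \<Rightarrow> 'x \<Rightarrow> 'a pmf.
           (\<forall>t as x. set_pmf (m t as x) \<subseteq> A i) \<and>
           (\<forall>t\<in>{1..T}. marginal Q1 Q (g(i := (\<lambda>t as xs. m t as (last xs)))) t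
                          = marginal Q1 Q g t) \<and>
           (\<forall>j. J Q1 Q (g(i := (\<lambda>t as xs. m t as (last xs)))) T (R j) = J Q1 Q g T (R j))"
proof -
  interpret finite_game X A Q1 Q
    using finX finA Q1X QX by unfold_locales
  let ?g' = "g(i := \<lambda>t as xs. cond_strategy i (g i) t as (last xs))"
  have valid': "valid_strategy (A j) (?g' j)" for j
    using valid_strategy_cond_strategy_update[OF g_valid] .
  have marginals: "marginal Q1 Q ?g' t = marginal Q1 Q g t" if "t \<noteq> 0" for t
    using marginal_cond_strategy_update[OF g_valid that] .
  have "J Q1 Q ?g' T (R j) = J Q1 Q g T (R j)" for j
    unfolding J_eq_sum_marginal[OF valid'] J_eq_sum_marginal[OF g_valid] marginals[OF Suc_not_Zero] ..
  then show ?thesis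
    using set_pmf_cond_strategy g_valid marginals
    by (intro exI[of _ "cond_strategy i (g i)"]) auto
qed

end
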